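(* Let $F_N(t)$ be a solution of the thermostatted Kac master equation with finite second moment, and let $K(t)=\int_{\mathbb{R}^N}\|v\|^2F_N(t,v)\,dv$ be its kinetic energy. Then $K(t)$ converges exponentially fast to $NK_g$ with rate $\mu/2$, i.e. $|K(t)-NK_g|\le |K(0)-NK_g|\,e^{-\mu t/2}$ for $t\ge0$.
   Context: Fix $N\ge2$, rates $\lambda>0,\mu>0$ and a probability density $g$ on $\mathbb{R}$ with $g\in L^2$, zero mean and finite second moment $K_g=\int w^2g(w)dw$. The master equation is $\partial_t F_N=-\lambda N(I-Q)[F_N]-\mu\sum_{j=1}^N(I-R_j)[F_N]$, with $Q[F](v)=\binom{N}{2}^{-1}\sum_{i<j}\frac{1}{2\pi}\int_0^{2\pi}F(v_{ij}(\theta))d\theta$ and $R_j[F](v)=\int_{\mathbb{R}}\frac{1}{2\pi}\int_0^{2\pi}g(w\cos\theta-v_j\sin\theta)F(v_j(w,\theta))d\theta dw$, where $v_{ij}(\theta)$ replaces $(v_i,v_j)$ by $(v_i\cos\theta+v_j\sin\theta,-v_i\sin\theta+v_j\cos\theta)$ and $v_j(w,\theta)$ replaces $v_j$ by $v_j\cos\theta+w\sin\theta$. *)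

theory Defs
  imports "HOL-Analysis.Analysis"
begin

text \<open>Velocities v in R^N are vectors of type (real, 'n) vec with N = CARD('n).
  The index type carries a linear order so that pairs i < j can be enumerated.\<close>

definition pair_rot :: "'n::finite \<Rightarrow> 'n \<Rightarrow> real \<Rightarrow> (real, 'n) vec \<Rightarrow> (real, 'n) vec" where
  "pair_rot i j \<theta> v = (\<chi> k. if k = i then v$i * cos \<theta> + v$j * sin \<theta>
                          else if k = j then - v$i * sin \<theta> + v$j * cos \<theta>
                          else v$k)"

definition thermo_upd :: "'n::finite \<Rightarrow> real \<Rightarrow> real \<Rightarrow> (real, 'n) vec \<Rightarrow> (real, 'n) vec" where
  "thermo_upd j w \<theta> v = (\<chi> k. if k = j then v$j * cos \<theta> + w * sin \<theta> else v$k)"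

definition kac_Q :: "((real, 'n::{finite,linorder}) vec \<Rightarrow> real) \<Rightarrow> (real, 'n) vec \<Rightarrow> real" where
  "kac_Q F v = (1 / real (CARD('n) choose 2)) *
     (\<Sum>(i,j) \<in> {(i,j). i < j}.
        (1 / (2*pi)) * (LINT \<theta>:{0..2*pi}|lborel. F (pair_rot i j \<theta> v)))"

definition kac_R :: "(real \<Rightarrow> real) \<Rightarrow> 'n::finite \<Rightarrow> ((real, 'n) vec \<Rightarrow> real) \<Rightarrow> (real, 'n) vec \<Rightarrow> real" where
  "kac_R g j F v = (LINT w|lborel. (1 / (2*pi)) *
     (LINT \<theta>:{0..2*pi}|lborel. g (w * cos \<theta> - v$j * sin \<theta>) * F (thermo_upd j w \<theta> v)))"

definition kac_gen :: "real \<Rightarrow> real \<Rightarrow> (real \<Rightarrow> real) \<Rightarrow> ((real, 'n::{finite,linorder}) vec \<Rightarrow> real)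
    \<Rightarrow> (real, 'n) vec \<Rightarrow> real" where
  "kac_gen lam mu g F v =
     - lam * real CARD('n) * (F v - kac_Q F v) - mu * (\<Sum>j\<in>UNIV. F v - kac_R g j F v)"

definition wnorm :: "((real, 'n::finite) vec \<Rightarrow> real) \<Rightarrow> real" where
  "wnorm f = (LINT v|lborel. (1 + norm v ^ 2) * \<bar>f v\<bar>)"

definition kac_solution :: "real \<Rightarrow> real \<Rightarrow> (real \<Rightarrow> real)
    \<Rightarrow> (real \<Rightarrow> (real, 'n::{finite,linorder}) vec \<Rightarrow> real) \<Rightarrow> bool" where
  "kac_solution lam mu g F \<longleftrightarrow>
     (\<forall>t\<ge>0.
        (\<forall>v. F t v \<ge> 0) \<and>
        integrable lborel (\<lambda>v. (1 + norm v ^ 2) * F t v) \<and>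
        (LINT v|lborel. F t v) = 1 \<and>
        integrable lborel (\<lambda>v. (1 + norm v ^ 2) * \<bar>kac_gen lam mu g (F t) v\<bar>) \<and>
        ((\<lambda>h. wnorm (\<lambda>v. (F (t + h) v - F t v) / h - kac_gen lam mu g (F t) v))
           \<longlongrightarrow> 0) (at 0 within {h. 0 \<le> t + h}))"

definition kinetic_energy :: "(real \<Rightarrow> (real, 'n::finite) vec \<Rightarrow> real) \<Rightarrow> real \<Rightarrow> real" where
  "kinetic_energy F t = (LINT v|lborel. norm v ^ 2 * F t v)"

end

theory Submission
  imports Defs
begin

text \<open>Multiplying the master equation by \<open>|v|\<^sup>2\<close> and integrating, the collision term
  drops out, because each pair rotation preserves both \<open>|v|\<close> and Lebesgue measure.
  In the thermostat term \<open>R\<^sub>j\<close>, rotating \<open>(v\<^sub>j, w)\<close> (again measure preserving)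
  shows that \<open>v\<^sub>j\<^sup>2\<close> is replaced by the average of \<open>(v\<^sub>j cos \<theta> - w sin \<theta>)\<^sup>2\<close> over
  \<open>\<theta>\<close> and \<open>w \<sim> g\<close>, namely \<open>(v\<^sub>j\<^sup>2 + K\<^sub>g)/2\<close>. Summing over \<open>j\<close> gives
  \<open>K' = -(\<mu>/2)(K - N K\<^sub>g)\<close>, so \<open>K - N K\<^sub>g\<close> decays exactly like \<open>exp (-\<mu>t/2)\<close>.\<close>

section \<open>Planar rotations preserve Lebesgue measure\<close>

definition plane_rot :: "real \<Rightarrow> real \<times> real \<Rightarrow> real \<times> real" where
  "plane_rot \<theta> p = (fst p * cos \<theta> + snd p * sin \<theta>, - fst p * sin \<theta> + snd p * cos \<theta>)"

lemma nn_integral_lborel_shear_fst: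
  fixes f :: "real \<times> real \<Rightarrow> ennreal"
  assumes "f \<in> borel_measurable borel"
  shows "(\<integral>\<^sup>+p. f (fst p + a * snd p, snd p) \<partial>lborel) = (\<integral>\<^sup>+p. f p \<partial>lborel)"
proof -
  have [measurable]: "f \<in> borel_measurable (lborel \<Otimes>\<^sub>M lborel)" using assms by (simp add: lborel_prod)
  have "(\<integral>\<^sup>+p. f (fst p + a * snd p, snd p) \<partial>lborel) = (\<integral>\<^sup>+y. \<integral>\<^sup>+x. f (x + a * y, y) \<partial>lborel \<partial>lborel)"
    unfolding lborel_prod[symmetric] by (subst lborel_pair.nn_integral_snd[symmetric]) measurable
  also have "\<dots> = (\<integral>\<^sup>+y. \<integral>\<^sup>+x. f (x, y) \<partial>lborel \<partial>lborel)"
  proof (rule nn_integral_cong)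
    fix y :: real
    show "(\<integral>\<^sup>+x. f (x + a * y, y) \<partial>lborel) = (\<integral>\<^sup>+x. f (x, y) \<partial>lborel)"
      using nn_integral_real_affine[of "\<lambda>x. f (x, y)" 1 "a * y"] by (simp add: add.commute)
  qed
  also have "\<dots> = (\<integral>\<^sup>+p. f p \<partial>lborel)"
    unfolding lborel_prod[symmetric] by (subst lborel_pair.nn_integral_snd[symmetric]) measurable
  finally show ?thesis .
qed

lemma nn_integral_lborel_shear_snd:
  fixes f :: "real \<times> real \<Rightarrow> ennreal"
  assumes "f \<in> borel_measurable borel"
  shows "(\<integral>\<^sup>+p. f (fst p, snd p + b * fst p) \<partial>lborel) = (\<integral>\<^sup>+p. f p \<partial>lborel)"
proof -
  have [measurable]: "f \<in> borel_measurable (lborel \<Otimes>\<^sub>M lborel)" using assms by (simp add: lborel_prod)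
  have "(\<integral>\<^sup>+p. f (fst p, snd p + b * fst p) \<partial>lborel) = (\<integral>\<^sup>+x. \<integral>\<^sup>+y. f (x, y + b * x) \<partial>lborel \<partial>lborel)"
    unfolding lborel_prod[symmetric] by (subst lborel.nn_integral_fst[symmetric]) measurable
  also have "\<dots> = (\<integral>\<^sup>+x. \<integral>\<^sup>+y. f (x, y) \<partial>lborel \<partial>lborel)"
  proof (rule nn_integral_cong)
    fix x :: real
    show "(\<integral>\<^sup>+y. f (x, y + b * x) \<partial>lborel) = (\<integral>\<^sup>+y. f (x, y) \<partial>lborel)"
      using nn_integral_real_affine[of "\<lambda>y. f (x, y)" 1 "b * x"] by (simp add: add.commute)
  qed
  also have "\<dots> = (\<integral>\<^sup>+p. f p \<partial>lborel)"
    unfolding lborel_prod[symmetric] by (subst lborel.nn_integral_fst[symmetric]) measurable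
  finally show ?thesis .
qed

lemma nn_integral_lborel_uminus_pair:
  fixes f :: "real \<times> real \<Rightarrow> ennreal"
  assumes "f \<in> borel_measurable borel"
  shows "(\<integral>\<^sup>+p. f (- fst p, - snd p) \<partial>lborel) = (\<integral>\<^sup>+p. f p \<partial>lborel)"
proof -
  have [measurable]: "f \<in> borel_measurable (lborel \<Otimes>\<^sub>M lborel)" using assms by (simp add: lborel_prod)
  have "(\<integral>\<^sup>+p. f (- fst p, - snd p) \<partial>lborel) = (\<integral>\<^sup>+x. \<integral>\<^sup>+y. f (-x, -y) \<partial>lborel \<partial>lborel)"
    unfolding lborel_prod[symmetric] by (subst lborel.nn_integral_fst[symmetric]) measurable
  also have "\<dots> = (\<integral>\<^sup>+x. \<integral>\<^sup>+y. f (x, y) \<partial>lborel \<partial>lborel)"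
  proof -
    have reflect: "(\<integral>\<^sup>+y. h (-y) \<partial>lborel) = (\<integral>\<^sup>+y. h y \<partial>lborel)"
      if "h \<in> borel_measurable borel" for h :: "real \<Rightarrow> ennreal"
      using nn_integral_real_affine[OF that, of "-1" 0] by simp
    have "(\<integral>\<^sup>+x. \<integral>\<^sup>+y. f (-x, -y) \<partial>lborel \<partial>lborel) = (\<integral>\<^sup>+x. \<integral>\<^sup>+y. f (-x, y) \<partial>lborel \<partial>lborel)"
      by (intro nn_integral_cong reflect) measurable
    also have "\<dots> = (\<integral>\<^sup>+x. \<integral>\<^sup>+y. f (x, y) \<partial>lborel \<partial>lborel)"
      by (rule reflect) measurable
    finally show ?thesis .
  qed
  also have "\<dots> = (\<integral>\<^sup>+p. f p \<partial>lborel)"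
    unfolding lborel_prod[symmetric] by (subst lborel.nn_integral_fst[symmetric]) measurable
  finally show ?thesis .
qed

text \<open>Away from the half-turn, a rotation is a product of three shears
  (Paeth's decomposition) with parameters \<open>a = tan (\<theta>/2)\<close> and \<open>b = - sin \<theta>\<close>.\<close>
lemma nn_integral_lborel_plane_rot:
  fixes f :: "real \<times> real \<Rightarrow> ennreal"
  assumes [measurable]: "f \<in> borel_measurable borel"
  shows "(\<integral>\<^sup>+p. f (plane_rot \<theta> p) \<partial>lborel) = (\<integral>\<^sup>+p. f p \<partial>lborel)"
proof (cases "cos \<theta> = -1")
  case True
  then have "sin \<theta> = 0" using sin_cos_squared_add[of \<theta>] by (simp add: power2_eq_square)
  then have "plane_rot \<theta> p = (- fst p, - snd p)" for p using True by (simp add: plane_rot_def)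
  then show ?thesis using nn_integral_lborel_uminus_pair[OF assms] by simp
next
  case False
  define c where "c = cos \<theta>"
  define s where "s = sin \<theta>"
  define a where "a = s / (1 + c)"
  define b where "b = - s"
  have c1: "1 + c \<noteq> 0" using False by (auto simp: c_def)
  have sc: "s\<^sup>2 = (1 - c) * (1 + c)"
    using sin_cos_squared_add[of \<theta>] by (simp add: c_def s_def algebra_simps power2_eq_square)
  have ab: "a * b = c - 1"
    using c1 sc by (simp add: a_def b_def field_simps power2_eq_square)
  have a2: "a * (2 + a * b) = s" using c1 ab by (simp add: a_def)
  let ?Sx = "\<lambda>p::real\<times>real. (fst p + a * snd p, snd p)"
  let ?Sy = "\<lambda>p::real\<times>real. (fst p, snd p + b * fst p)"
  have paeth: "plane_rot \<theta> p = ?Sx (?Sy (?Sx p))" for p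
  proof -
    have "fst p + a * snd p + a * (snd p + b * (fst p + a * snd p))
        = fst p * (1 + a * b) + snd p * (a * (2 + a * b))"
      by (simp add: algebra_simps)
    also have "\<dots> = fst p * c + snd p * s" using ab a2 by simp
    finally have 1: "fst p + a * snd p + a * (snd p + b * (fst p + a * snd p)) = fst p * c + snd p * s" .
    have "snd p + b * (fst p + a * snd p) = b * fst p + (1 + a * b) * snd p"
      by (simp add: algebra_simps)
    also have "\<dots> = - fst p * s + snd p * c" using ab by (simp add: b_def)
    finally have 2: "snd p + b * (fst p + a * snd p) = - fst p * s + snd p * c" .
    show ?thesis using 1 2 by (simp add: plane_rot_def c_def s_def)
  qed
  have Sx: "?Sx \<in> borel_measurable borel" and Sy: "?Sy \<in> borel_measurable borel"
    by (intro borel_measurable_continuous_onI continuous_intros)+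
  have fSx: "(\<lambda>q. f (?Sx q)) \<in> borel_measurable borel"
    using measurable_compose[OF Sx assms] by (simp add: comp_def)
  have fSxSy: "(\<lambda>q. f (?Sx (?Sy q))) \<in> borel_measurable borel"
    using measurable_compose[OF Sy fSx] by (simp add: comp_def)
  show ?thesis
    unfolding paeth
    using nn_integral_lborel_shear_fst[OF fSxSy, of a] nn_integral_lborel_shear_snd[OF fSx, of b]
      nn_integral_lborel_shear_fst[OF assms, of a]
    by simp
qed

section \<open>Lebesgue measure on vectors and rotations in coordinate planes\<close>

lemma borel_measurable_vec_lambda_PiM [measurable]:
  "(\<lambda>x. \<chi> k. x k) \<in> Pi\<^sub>M I (\<lambda>_::'n::finite. lborel) \<rightarrow>\<^sub>M (borel :: (real,'n) vec measure)"
proof -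
  have "(\<lambda>x. (\<chi> k. x k) \<bullet> axis j 1) \<in> borel_measurable (Pi\<^sub>M I (\<lambda>_::'n. lborel :: real measure))" for j
  proof (cases "j \<in> I")
    case True
    then show ?thesis by (simp add: inner_axis)
  next
    case False
    have "(\<lambda>x. (\<chi> k. x k) \<bullet> axis j 1) \<in> borel_measurable (Pi\<^sub>M I (\<lambda>_::'n. lborel :: real measure))
       \<longleftrightarrow> (\<lambda>x. undefined :: real) \<in> borel_measurable (Pi\<^sub>M I (\<lambda>_::'n. lborel :: real measure))"
      using False by (intro measurable_cong) (auto simp: inner_axis space_PiM PiE_def extensional_def)
    then show ?thesis by simp
  qed
  then show ?thesis by (subst borel_measurable_euclidean_space) (auto simp: Basis_vec_def)
qed

lemma prod_Basis_vec: "(\<Prod>b\<in>(Basis :: (real,'n::finite) vec set). f b) = (\<Prod>k\<in>UNIV. f (axis k 1))"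
proof -
  have "(Basis :: (real,'n) vec set) = (\<lambda>k. axis k 1) ` UNIV" by (auto simp: Basis_vec_def)
  moreover have "inj (\<lambda>k::'n. axis k (1::real))" by (auto intro!: injI simp: axis_eq_axis)
  ultimately show ?thesis by (metis prod.reindex_cong)
qed

lemma lborel_vec_eq_distr_PiM:
  "(lborel :: (real,'n::finite) vec measure) = distr (Pi\<^sub>M UNIV (\<lambda>_. lborel)) borel (\<lambda>x. \<chi> k. x k)"
proof (rule lborel_eqI)
  interpret P: product_sigma_finite "\<lambda>_::'n. lborel :: real measure"
    by (simp add: product_sigma_finite_def sigma_finite_lborel)
  fix l u :: "(real,'n) vec"
  assume le: "\<And>b. b \<in> Basis \<Longrightarrow> l \<bullet> b \<le> u \<bullet> b"
  have le': "l $ k \<le> u $ k" for k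
  proof -
    have "axis k 1 \<in> (Basis :: (real,'n) vec set)" by (auto simp: Basis_vec_def)
    from le[OF this] show ?thesis by (simp add: inner_axis)
  qed
  have "(\<lambda>x. \<chi> k. x k) -` box l u \<inter> space (Pi\<^sub>M UNIV (\<lambda>_. lborel)) = (\<Pi>\<^sub>E k\<in>UNIV. {l$k<..<u$k})"
    by (auto simp: space_PiM mem_box_cart PiE_def Pi_def)
  then have "emeasure (distr (Pi\<^sub>M UNIV (\<lambda>_. lborel)) borel (\<lambda>x. \<chi> k. x k)) (box l u)
      = emeasure (Pi\<^sub>M UNIV (\<lambda>_. lborel)) (\<Pi>\<^sub>E k\<in>UNIV. {l$k<..<u$k})"
    by (simp add: emeasure_distr)
  also have "\<dots> = (\<Prod>k\<in>UNIV. emeasure lborel {l$k<..<u$k})"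
    by (rule P.emeasure_PiM) auto
  also have "\<dots> = ennreal (\<Prod>k\<in>UNIV. u$k - l$k)"
    using le' by (simp add: emeasure_lborel_Ioo prod_ennreal)
  also have "\<dots> = ennreal (\<Prod>b\<in>Basis. (u - l) \<bullet> b)"
    by (simp add: prod_Basis_vec inner_axis)
  finally show "emeasure (distr (Pi\<^sub>M UNIV (\<lambda>_. lborel)) borel (\<lambda>x. \<chi> k. x k)) (box l u) = (\<Prod>b\<in>Basis. (u - l) \<bullet> b)"
    by (simp add: prod_ennreal[symmetric] prod_nonneg)
qed simp

lemma measurable_lborel_pair_iff:
  fixes f :: "'a::euclidean_space \<times> 'b::euclidean_space \<Rightarrow> 'c::topological_space"
  shows "f \<in> borel_measurable (lborel \<Otimes>\<^sub>M lborel) \<longleftrightarrow> f \<in> borel_measurable (borel \<Otimes>\<^sub>M borel)"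
proof -
  have "sets (lborel \<Otimes>\<^sub>M lborel) = sets ((borel::'a measure) \<Otimes>\<^sub>M (borel::'b measure))"
    by (intro sets_pair_measure_cong) simp_all
  from measurable_cong_sets[OF this refl, of "borel :: 'c measure"] show ?thesis by simp
qed

definition vec_upd :: "'n::finite \<Rightarrow> real \<Rightarrow> (real,'n) vec \<Rightarrow> (real,'n) vec" where
  "vec_upd j a v = (\<chi> k. if k = j then a else v$k)"

lemma vec_upd_nth_same [simp]: "vec_upd j a v $ j = a"
  by (simp add: vec_upd_def)

lemma vec_upd_nth_other: "k \<noteq> j \<Longrightarrow> vec_upd j a v $ k = v $ k"
  by (simp add: vec_upd_def)

lemma vec_upd_vec_upd_same [simp]: "vec_upd j a (vec_upd j b v) = vec_upd j a v"
  by (simp add: vec_upd_def vec_eq_iff)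

lemma vec_upd_commute: "i \<noteq> j \<Longrightarrow> vec_upd i a (vec_upd j b v) = vec_upd j b (vec_upd i a v)"
  by (auto simp: vec_upd_def vec_eq_iff)

lemma vec_lambda_fun_upd: "(\<chi> k. (x(j:=a)) k) = vec_upd j a (\<chi> k. x k)"
  by (simp add: vec_upd_def vec_eq_iff)

lemma borel_measurable_vec_nth [measurable]: "(\<lambda>v::(real,'n::finite) vec. v $ k) \<in> borel_measurable borel"
  by (intro borel_measurable_continuous_onI continuous_intros)

lemma borel_measurable_vec_upd [measurable]:
  fixes j :: "'n::finite"
  assumes [measurable]: "a \<in> borel_measurable M" "v \<in> borel_measurable M"
  shows "(\<lambda>x. vec_upd j (a x) (v x)) \<in> borel_measurable M"
proof -
  have "(\<lambda>x. vec_upd j (a x) (v x) \<bullet> axis k 1) = (\<lambda>x. if k = j then a x else v x $ k)" for k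
    by (simp add: inner_axis vec_upd_def)
  then have "(\<lambda>x. vec_upd j (a x) (v x) \<bullet> axis k 1) \<in> borel_measurable M" for k
    by simp
  then show ?thesis by (subst borel_measurable_euclidean_space) (auto simp: Basis_vec_def)
qed

lemma nn_integral_lborel_vec_PiM:
  fixes f :: "(real,'n::finite) vec \<Rightarrow> ennreal"
  assumes [measurable]: "f \<in> borel_measurable borel"
  shows "(\<integral>\<^sup>+v. f v \<partial>lborel) = (\<integral>\<^sup>+x. f (\<chi> k. x k) \<partial>Pi\<^sub>M UNIV (\<lambda>_. lborel))"
  by (subst lborel_vec_eq_distr_PiM) (simp add: nn_integral_distr)

lemma nn_integral_PiM_vec_split:
  fixes f :: "(real,'n::finite) vec \<Rightarrow> ennreal"
  assumes "j \<in> I" and [measurable]: "f \<in> borel_measurable borel"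
  shows "(\<integral>\<^sup>+x. f (\<chi> k. x k) \<partial>Pi\<^sub>M I (\<lambda>_. lborel))
       = (\<integral>\<^sup>+x. \<integral>\<^sup>+y. f (vec_upd j y (\<chi> k. x k)) \<partial>lborel \<partial>Pi\<^sub>M (I - {j}) (\<lambda>_. lborel))"
proof -
  interpret P: product_sigma_finite "\<lambda>_::'n. lborel :: real measure"
    by (simp add: product_sigma_finite_def sigma_finite_lborel)
  have I: "I = insert j (I - {j})" using assms(1) by auto
  have "(\<lambda>x. f (\<chi> k. x k)) \<in> borel_measurable (Pi\<^sub>M (insert j (I - {j})) (\<lambda>_. lborel))"
    by measurable
  from P.product_nn_integral_insert[OF _ _ this]
  have "(\<integral>\<^sup>+x. f (\<chi> k. x k) \<partial>Pi\<^sub>M I (\<lambda>_. lborel))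
      = (\<integral>\<^sup>+x. \<integral>\<^sup>+y. f (\<chi> k. (x(j:=y)) k) \<partial>lborel \<partial>Pi\<^sub>M (I - {j}) (\<lambda>_. lborel))"
    using I by simp
  then show ?thesis unfolding vec_lambda_fun_upd .
qed

lemma measurable_plane_rot [measurable]: "plane_rot \<theta> \<in> (borel \<Otimes>\<^sub>M borel) \<rightarrow>\<^sub>M (borel \<Otimes>\<^sub>M borel)"
  unfolding plane_rot_def by measurable

lemma nn_integral_lborel_rot_coord:
  fixes h :: "(real,'n::finite) vec \<Rightarrow> real \<Rightarrow> ennreal"
  assumes h: "case_prod h \<in> borel_measurable (borel \<Otimes>\<^sub>M borel)"
  shows "(\<integral>\<^sup>+v. \<integral>\<^sup>+w. h (vec_upd j (fst (plane_rot \<theta> (v$j,w))) v) (snd (plane_rot \<theta> (v$j,w))) \<partial>lborel \<partial>lborel)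
       = (\<integral>\<^sup>+v. \<integral>\<^sup>+w. h v w \<partial>lborel \<partial>lborel)"
proof -
  have [measurable]: "case_prod h \<in> borel_measurable (lborel \<Otimes>\<^sub>M lborel)"
    using h by (simp add: measurable_lborel_pair_iff)
  define G where "G v = (\<integral>\<^sup>+w. h (vec_upd j (fst (plane_rot \<theta> (v$j,w))) v) (snd (plane_rot \<theta> (v$j,w))) \<partial>lborel)" for v
  define G0 where "G0 v = (\<integral>\<^sup>+w. h v w \<partial>lborel)" for v
  have [measurable]: "G \<in> borel_measurable borel" "G0 \<in> borel_measurable borel"
    unfolding G_def G0_def by measurable
  have coord: "(\<integral>\<^sup>+y. G (vec_upd j y u) \<partial>lborel) = (\<integral>\<^sup>+y. G0 (vec_upd j y u) \<partial>lborel)" for u :: "(real,'n) vec"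
  proof -
    define H where "H p = h (vec_upd j (fst p) u) (snd p)" for p
    have [measurable]: "H \<in> borel_measurable (lborel \<Otimes>\<^sub>M lborel)"
      unfolding H_def by measurable
    then have "H \<in> borel_measurable borel" by (simp add: lborel_prod)
    have "(\<integral>\<^sup>+y. G (vec_upd j y u) \<partial>lborel) = (\<integral>\<^sup>+p. H (plane_rot \<theta> p) \<partial>(lborel \<Otimes>\<^sub>M lborel))"
      unfolding G_def H_def by (simp add: lborel.nn_integral_fst[symmetric])
    also have "\<dots> = (\<integral>\<^sup>+p. H p \<partial>(lborel \<Otimes>\<^sub>M lborel))"
      using nn_integral_lborel_plane_rot[OF \<open>H \<in> borel_measurable borel\<close>, of \<theta>] by (simp add: lborel_prod)
    also have "\<dots> = (\<integral>\<^sup>+y. G0 (vec_upd j y u) \<partial>lborel)"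
      unfolding G0_def H_def by (simp add: lborel.nn_integral_fst[symmetric])
    finally show ?thesis .
  qed
  have "(\<integral>\<^sup>+v. G v \<partial>lborel) = (\<integral>\<^sup>+x. \<integral>\<^sup>+y. G (vec_upd j y (\<chi> k. x k)) \<partial>lborel \<partial>Pi\<^sub>M (UNIV - {j}) (\<lambda>_. lborel))"
    by (simp add: nn_integral_lborel_vec_PiM nn_integral_PiM_vec_split)
  also have "\<dots> = (\<integral>\<^sup>+x. \<integral>\<^sup>+y. G0 (vec_upd j y (\<chi> k. x k)) \<partial>lborel \<partial>Pi\<^sub>M (UNIV - {j}) (\<lambda>_. lborel))"
    by (simp add: coord)
  also have "\<dots> = (\<integral>\<^sup>+v. G0 v \<partial>lborel)"
    by (simp add: nn_integral_lborel_vec_PiM nn_integral_PiM_vec_split)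
  finally show ?thesis by (simp add: G_def G0_def)
qed

lemma pair_rot_eq_vec_upd:
  assumes "i \<noteq> j"
  shows "pair_rot i j \<theta> v
       = vec_upd i (fst (plane_rot \<theta> (v$i, v$j))) (vec_upd j (snd (plane_rot \<theta> (v$i, v$j))) v)"
  using assms by (simp add: pair_rot_def vec_upd_def plane_rot_def vec_eq_iff)

lemma borel_measurable_pair_rot [measurable]:
  fixes i j :: "'n::finite"
  assumes [measurable]: "t \<in> borel_measurable M" "v \<in> borel_measurable M"
  shows "(\<lambda>x. pair_rot i j (t x) (v x)) \<in> borel_measurable M"
proof -
  have "(\<lambda>x. pair_rot i j (t x) (v x) \<bullet> axis k 1) = (\<lambda>x. if k = i then v x $ i * cos (t x) + v x $ j * sin (t x)
      else if k = j then - v x $ i * sin (t x) + v x $ j * cos (t x) else v x $ k)" for k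
    by (simp add: inner_axis pair_rot_def)
  then have "(\<lambda>x. pair_rot i j (t x) (v x) \<bullet> axis k 1) \<in> borel_measurable M" for k
    by simp
  then show ?thesis by (subst borel_measurable_euclidean_space) (auto simp: Basis_vec_def)
qed

lemma nn_integral_lborel_pair_rot:
  fixes f :: "(real,'n::finite) vec \<Rightarrow> ennreal"
  assumes ij: "i \<noteq> j" and [measurable]: "f \<in> borel_measurable borel"
  shows "(\<integral>\<^sup>+v. f (pair_rot i j \<theta> v) \<partial>lborel) = (\<integral>\<^sup>+v. f v \<partial>lborel)"
proof -
  have split2: "(\<integral>\<^sup>+v. G v \<partial>lborel) = (\<integral>\<^sup>+z. \<integral>\<^sup>+b. \<integral>\<^sup>+a. G (vec_upd i a (vec_upd j b (\<chi> k. z k)))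
      \<partial>lborel \<partial>lborel \<partial>Pi\<^sub>M (UNIV - {i} - {j}) (\<lambda>_. lborel))"
    if [measurable]: "G \<in> borel_measurable borel" for G :: "(real,'n) vec \<Rightarrow> ennreal"
  proof -
    have "j \<in> UNIV - {i}" using ij by auto
    have "(\<integral>\<^sup>+v. G v \<partial>lborel)
        = (\<integral>\<^sup>+x. \<integral>\<^sup>+a. G (vec_upd i a (\<chi> k. x k)) \<partial>lborel \<partial>Pi\<^sub>M (UNIV - {i}) (\<lambda>_. lborel))"
      by (simp add: nn_integral_lborel_vec_PiM nn_integral_PiM_vec_split)
    also have "\<dots> = (\<integral>\<^sup>+z. \<integral>\<^sup>+b. \<integral>\<^sup>+a. G (vec_upd i a (vec_upd j b (\<chi> k. z k)))
        \<partial>lborel \<partial>lborel \<partial>Pi\<^sub>M (UNIV - {i} - {j}) (\<lambda>_. lborel))"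
      by (rule nn_integral_PiM_vec_split[OF \<open>j \<in> UNIV - {i}\<close>]) measurable
    finally show ?thesis .
  qed
  have coords: "(\<integral>\<^sup>+b. \<integral>\<^sup>+a. f (pair_rot i j \<theta> (vec_upd i a (vec_upd j b u))) \<partial>lborel \<partial>lborel)
      = (\<integral>\<^sup>+b. \<integral>\<^sup>+a. f (vec_upd i a (vec_upd j b u)) \<partial>lborel \<partial>lborel)" for u
  proof -
    define H where "H p = f (vec_upd i (fst p) (vec_upd j (snd p) u))" for p
    have [measurable]: "H \<in> borel_measurable (lborel \<Otimes>\<^sub>M lborel)"
      unfolding H_def by measurable
    then have "H \<in> borel_measurable borel" by (simp add: lborel_prod)
    have "f (pair_rot i j \<theta> (vec_upd i a (vec_upd j b u))) = H (plane_rot \<theta> (a, b))" for a b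
      using ij by (simp add: pair_rot_eq_vec_upd vec_upd_nth_other vec_upd_commute H_def)
    then have "(\<integral>\<^sup>+b. \<integral>\<^sup>+a. f (pair_rot i j \<theta> (vec_upd i a (vec_upd j b u))) \<partial>lborel \<partial>lborel)
        = (\<integral>\<^sup>+p. H (plane_rot \<theta> p) \<partial>(lborel \<Otimes>\<^sub>M lborel))"
      by (simp add: lborel_pair.nn_integral_snd[symmetric])
    also have "\<dots> = (\<integral>\<^sup>+p. H p \<partial>(lborel \<Otimes>\<^sub>M lborel))"
      using nn_integral_lborel_plane_rot[OF \<open>H \<in> borel_measurable borel\<close>, of \<theta>] by (simp add: lborel_prod)
    also have "\<dots> = (\<integral>\<^sup>+b. \<integral>\<^sup>+a. f (vec_upd i a (vec_upd j b u)) \<partial>lborel \<partial>lborel)"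
      by (simp add: lborel_pair.nn_integral_snd[symmetric] H_def)
    finally show ?thesis .
  qed
  show ?thesis
    by (simp add: split2 coords)
qed

section \<open>Energy of the collision and thermostat kernels\<close>

lemma norm_vec_power2: "norm (v::(real,'n::finite) vec) ^ 2 = (\<Sum>k\<in>UNIV. (v$k)^2)"
  by (simp only: power2_norm_eq_inner inner_vec_def) (simp add: power2_eq_square)

lemma norm_vec_power2_remove: "norm (v::(real,'n::finite) vec)^2 = (v$j)^2 + (\<Sum>k\<in>UNIV-{j}. (v$k)^2)"
  unfolding norm_vec_power2 by (subst sum.remove[of _ j]) auto

lemma vec_nth_power2_le_norm: "(v$j)^2 \<le> norm (v::(real,'n::finite) vec)^2"
  using component_le_norm_cart[of v j] by (metis abs_le_square_iff abs_norm_cancel)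

lemma norm_vec_upd_power2: "norm (vec_upd j x v)^2 - x^2 = norm v^2 - (v$j)^2"
proof -
  have "(\<Sum>k\<in>UNIV-{j}. (vec_upd j x v $ k)^2) = (\<Sum>k\<in>UNIV-{j}. (v$k)^2)"
    by (rule sum.cong) (auto simp: vec_upd_nth_other)
  then show ?thesis using norm_vec_power2_remove[of "vec_upd j x v" j] norm_vec_power2_remove[of v j] by simp
qed

lemma norm_pair_rot:
  fixes v :: "(real,'n::finite) vec"
  assumes "i \<noteq> j" shows "norm (pair_rot i j \<theta> v) = norm v"
proof -
  let ?w = "pair_rot i j \<theta> v"
  have rest: "(\<Sum>k\<in>UNIV-{i}-{j}. (?w$k)^2) = (\<Sum>k\<in>UNIV-{i}-{j}. (v$k)^2)"
    by (rule sum.cong) (auto simp: pair_rot_def)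
  have "(?w$i)^2 + (?w$j)^2 = (v$i * cos \<theta> + v$j * sin \<theta>)^2 + (- v$i * sin \<theta> + v$j * cos \<theta>)^2"
    using assms by (simp add: pair_rot_def)
  also have "\<dots> = (v$i)^2 + (v$j)^2"
    using sin_cos_squared_add[of \<theta>] by algebra
  finally have ij: "(?w$i)^2 + (?w$j)^2 = (v$i)^2 + (v$j)^2" .
  have "norm u ^ 2 = (u$i)^2 + (u$j)^2 + (\<Sum>k\<in>UNIV-{i}-{j}. (u$k)^2)" for u :: "(real,'n) vec"
    using assms by (simp add: norm_vec_power2_remove[of u i] sum.remove[of "UNIV-{i}" j])
  then have "norm ?w ^ 2 = norm v ^ 2" using rest ij by simp
  then show ?thesis by (simp add: power2_eq_iff_nonneg)
qed

lemma thermo_upd_eq_vec_upd: "thermo_upd j w \<theta> v = vec_upd j (v$j * cos \<theta> + w * sin \<theta>) v"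
  by (simp add: thermo_upd_def vec_upd_def vec_eq_iff)

lemma borel_measurable_thermo_upd [measurable]:
  fixes j :: "'n::finite"
  assumes [measurable]: "w \<in> borel_measurable M" "t \<in> borel_measurable M" "v \<in> borel_measurable M"
  shows "(\<lambda>x. thermo_upd j (w x) (t x) (v x)) \<in> borel_measurable M"
  unfolding thermo_upd_eq_vec_upd by measurable

lemma has_integral_trig_square:
  "((\<lambda>\<theta>. A + (x * cos \<theta> - y * sin \<theta>)^2) has_integral (2*pi*A + pi*x^2 + pi*y^2)) {0..2*pi}"
proof -
  define P where "P \<theta> = A * \<theta> + x^2 * (\<theta>/2 + sin \<theta> * cos \<theta> / 2) + y^2 * (\<theta>/2 - sin \<theta> * cos \<theta> / 2)
    - x * y * (sin \<theta>)^2" for \<theta>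
  have "(P has_real_derivative (A + (x * cos \<theta> - y * sin \<theta>)^2)) (at \<theta>)" for \<theta>
  proof -
    have sc: "sin \<theta> * sin \<theta> + cos \<theta> * cos \<theta> = 1"
      using sin_cos_squared_add[of \<theta>] by (simp add: power2_eq_square)
    have "(P has_real_derivative (A + x^2 * (1/2 + (cos \<theta> * cos \<theta> - sin \<theta> * sin \<theta>)/2)
        + y^2 * (1/2 - (cos \<theta> * cos \<theta> - sin \<theta> * sin \<theta>)/2) - x * y * (2 * sin \<theta> * cos \<theta>))) (at \<theta>)"
      unfolding P_def
      by (rule derivative_eq_intros refl | simp)+ (simp add: algebra_simps power2_eq_square field_simps)
    moreover have "1/2 + (cos \<theta> * cos \<theta> - sin \<theta> * sin \<theta>)/2 = cos \<theta> * cos \<theta>"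
      "1/2 - (cos \<theta> * cos \<theta> - sin \<theta> * sin \<theta>)/2 = sin \<theta> * sin \<theta>"
      using sc by (simp_all add: field_simps)
    ultimately show ?thesis by (simp add: power2_eq_square algebra_simps)
  qed
  then have "((\<lambda>\<theta>. A + (x * cos \<theta> - y * sin \<theta>)^2) has_integral (P (2*pi) - P 0)) {0..2*pi}"
    by (intro fundamental_theorem_of_calculus)
      (auto intro: DERIV_subset simp: has_real_derivative_iff_has_vector_derivative[symmetric])
  moreover have "P (2*pi) - P 0 = 2*pi*A + pi*x^2 + pi*y^2"
    by (simp add: P_def algebra_simps)
  ultimately show ?thesis by simp
qed

lemma nn_integral_trig_square:
  assumes "A \<ge> 0"
  shows "(\<integral>\<^sup>+\<theta>. ennreal (A + (x * cos \<theta> - y * sin \<theta>)^2) * indicator {0..2*pi} \<theta> \<partial>lborel)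
       = ennreal (2*pi*A + pi*x^2 + pi*y^2)"
  by (rule nn_integral_has_integral_lebesgue'[OF _ has_integral_trig_square]) (use assms in auto)

lemma nn_integral_energy_pair_rot:
  fixes F :: "(real,'n::finite) vec \<Rightarrow> real"
  assumes ij: "i \<noteq> j" and [measurable]: "F \<in> borel_measurable borel" and F0: "\<And>v. 0 \<le> F v"
  shows "(\<integral>\<^sup>+v. ennreal (norm v^2) * (\<integral>\<^sup>+\<theta>. ennreal (F (pair_rot i j \<theta> v)) * indicator {0..2*pi} \<theta> \<partial>lborel) \<partial>lborel)
       = ennreal (2*pi) * (\<integral>\<^sup>+v. ennreal (norm v^2 * F v) \<partial>lborel)"
proof -
  have "(\<integral>\<^sup>+v. ennreal (norm v^2) * (\<integral>\<^sup>+\<theta>. ennreal (F (pair_rot i j \<theta> v)) * indicator {0..2*pi} \<theta> \<partial>lborel) \<partial>lborel)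
      = (\<integral>\<^sup>+v. \<integral>\<^sup>+\<theta>. ennreal (norm v^2 * F (pair_rot i j \<theta> v)) * indicator {0..2*pi} \<theta> \<partial>lborel \<partial>lborel)"
    by (subst nn_integral_cmult[symmetric]) (auto simp: ennreal_mult F0 mult.assoc)
  also have "\<dots> = (\<integral>\<^sup>+\<theta>. \<integral>\<^sup>+v. ennreal (norm v^2 * F (pair_rot i j \<theta> v)) * indicator {0..2*pi} \<theta> \<partial>lborel \<partial>lborel)"
    by (rule lborel_pair.Fubini'[symmetric]) (simp add: split_beta', measurable)
  also have "\<dots> = (\<integral>\<^sup>+\<theta>. (\<integral>\<^sup>+v. ennreal (norm (pair_rot i j \<theta> v)^2 * F (pair_rot i j \<theta> v)) \<partial>lborel) * indicator {0..2*pi} \<theta> \<partial>lborel)"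
    by (subst nn_integral_multc) (auto simp: norm_pair_rot[OF ij])
  also have "\<dots> = (\<integral>\<^sup>+\<theta>. (\<integral>\<^sup>+v. ennreal (norm v^2 * F v) \<partial>lborel) * indicator {0..2*pi} \<theta> \<partial>lborel)"
    by (subst nn_integral_lborel_pair_rot[OF ij, where f="\<lambda>v. ennreal (norm v^2 * F v)"]) auto
  also have "\<dots> = ennreal (2*pi) * (\<integral>\<^sup>+v. ennreal (norm v^2 * F v) \<partial>lborel)"
    by (subst nn_integral_cmult) (auto simp: mult.commute)
  finally show ?thesis .
qed

text \<open>\<open>u$j cos \<theta> - w sin \<theta>\<close> is the old coordinate \<open>v$j\<close> expressed in the rotated variables.\<close>
lemma nn_integral_energy_thermo_upd:
  fixes F :: "(real,'n::finite) vec \<Rightarrow> real" and g :: "real \<Rightarrow> real"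
  assumes [measurable]: "F \<in> borel_measurable borel" "g \<in> borel_measurable borel"
  shows "(\<integral>\<^sup>+v. \<integral>\<^sup>+w. ennreal (norm v^2 * (g (w * cos \<theta> - v$j * sin \<theta>) * F (thermo_upd j w \<theta> v))) \<partial>lborel \<partial>lborel)
       = (\<integral>\<^sup>+u. \<integral>\<^sup>+w. ennreal (g w * F u * (norm u^2 - (u$j)^2 + (u$j * cos \<theta> - w * sin \<theta>)^2)) \<partial>lborel \<partial>lborel)"
proof -
  define J where "J u w = ennreal (g w * F u * (norm u^2 - (u$j)^2 + (u$j * cos \<theta> - w * sin \<theta>)^2))"
    for u :: "(real,'n) vec" and w :: real
  have "ennreal (norm v^2 * (g (w * cos \<theta> - v$j * sin \<theta>) * F (thermo_upd j w \<theta> v)))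
      = J (vec_upd j (fst (plane_rot \<theta> (v$j,w))) v) (snd (plane_rot \<theta> (v$j,w)))" for v w
  proof -
    let ?x = "v$j * cos \<theta> + w * sin \<theta>"
    have "?x * cos \<theta> - (w * cos \<theta> - v$j * sin \<theta>) * sin \<theta> = v$j"
      using sin_cos_squared_add[of \<theta>] by algebra
    then have "norm (vec_upd j ?x v)^2 - ?x^2 + (?x * cos \<theta> - (w * cos \<theta> - v$j * sin \<theta>) * sin \<theta>)^2 = norm v^2"
      by (simp add: norm_vec_upd_power2)
    then show ?thesis
      by (simp add: J_def plane_rot_def thermo_upd_eq_vec_upd algebra_simps)
  qed
  then have "(\<integral>\<^sup>+v. \<integral>\<^sup>+w. ennreal (norm v^2 * (g (w * cos \<theta> - v$j * sin \<theta>) * F (thermo_upd j w \<theta> v))) \<partial>lborel \<partial>lborel)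
      = (\<integral>\<^sup>+v. \<integral>\<^sup>+w. J (vec_upd j (fst (plane_rot \<theta> (v$j,w))) v) (snd (plane_rot \<theta> (v$j,w))) \<partial>lborel \<partial>lborel)"
    by simp
  also have "\<dots> = (\<integral>\<^sup>+u. \<integral>\<^sup>+w. J u w \<partial>lborel \<partial>lborel)"
    by (rule nn_integral_lborel_rot_coord) (unfold J_def, measurable)
  finally show ?thesis unfolding J_def .
qed

lemma nn_integral_separable:
  fixes A C :: "'a \<Rightarrow> ennreal" and B D :: "'b \<Rightarrow> ennreal"
  assumes [measurable]: "A \<in> borel_measurable M" "C \<in> borel_measurable M"
    "B \<in> borel_measurable N" "D \<in> borel_measurable N"
  shows "(\<integral>\<^sup>+x. \<integral>\<^sup>+y. a * (A x * B y) + b * (C x * D y) \<partial>N \<partial>M)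
       = a * ((\<integral>\<^sup>+x. A x \<partial>M) * (\<integral>\<^sup>+y. B y \<partial>N)) + b * ((\<integral>\<^sup>+x. C x \<partial>M) * (\<integral>\<^sup>+y. D y \<partial>N))"
proof -
  have "(\<integral>\<^sup>+y. a * (A x * B y) + b * (C x * D y) \<partial>N)
      = a * (A x * (\<integral>\<^sup>+y. B y \<partial>N)) + b * (C x * (\<integral>\<^sup>+y. D y \<partial>N))" for x
    by (simp add: nn_integral_add nn_integral_cmult)
  then show ?thesis
    by (simp add: nn_integral_add nn_integral_cmult nn_integral_multc)
qed

lemma nn_integral_energy_thermo:
  fixes F :: "(real,'n::finite) vec \<Rightarrow> real" and g :: "real \<Rightarrow> real" and j :: 'n
  assumes [measurable]: "F \<in> borel_measurable borel" and F0: "\<And>v. 0 \<le> F v"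
    and [measurable]: "g \<in> borel_measurable borel" and g0: "\<And>w. 0 \<le> g w"
  shows "(\<integral>\<^sup>+v. ennreal (norm v^2) * (\<integral>\<^sup>+w. \<integral>\<^sup>+\<theta>. ennreal (g (w * cos \<theta> - v$j * sin \<theta>) * F (thermo_upd j w \<theta> v))
            * indicator {0..2*pi} \<theta> \<partial>lborel \<partial>lborel) \<partial>lborel)
   = ennreal (2*pi) * ((\<integral>\<^sup>+u. ennreal (F u * (norm u^2 - (u$j)^2/2)) \<partial>lborel) * (\<integral>\<^sup>+w. ennreal (g w) \<partial>lborel))
     + ennreal pi * ((\<integral>\<^sup>+u. ennreal (F u) \<partial>lborel) * (\<integral>\<^sup>+w. ennreal (w^2 * g w) \<partial>lborel))"
proof -
  define I where "I v w \<theta> = ennreal (norm v^2 * (g (w * cos \<theta> - v$j * sin \<theta>) * F (thermo_upd j w \<theta> v)))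
    * indicator {0..2*pi} \<theta>" for v :: "(real,'n) vec" and w \<theta> :: real
  define K where "K \<theta> u w = ennreal (g w * F u * (norm u^2 - (u$j)^2 + (u$j * cos \<theta> - w * sin \<theta>)^2))
    * indicator {0..2*pi} \<theta>" for \<theta> w :: real and u :: "(real,'n) vec"
  have [measurable]: "(\<lambda>p. I (fst p) w (snd p)) \<in> borel_measurable (lborel \<Otimes>\<^sub>M lborel)"
    "(\<lambda>p. \<integral>\<^sup>+w. I (fst p) w (snd p) \<partial>lborel) \<in> borel_measurable (lborel \<Otimes>\<^sub>M lborel)"
    "(\<lambda>p. K (snd p) u (fst p)) \<in> borel_measurable (lborel \<Otimes>\<^sub>M lborel)"
    "(\<lambda>p. \<integral>\<^sup>+w. K (snd p) (fst p) w \<partial>lborel) \<in> borel_measurable (lborel \<Otimes>\<^sub>M lborel)"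
    for u :: "(real,'n) vec" and w :: real
    unfolding I_def K_def by measurable
  have "ennreal (norm v^2) * (\<integral>\<^sup>+w. \<integral>\<^sup>+\<theta>. ennreal (g (w * cos \<theta> - v$j * sin \<theta>) * F (thermo_upd j w \<theta> v))
      * indicator {0..2*pi} \<theta> \<partial>lborel \<partial>lborel) = (\<integral>\<^sup>+w. \<integral>\<^sup>+\<theta>. I v w \<theta> \<partial>lborel \<partial>lborel)" for v
    by (simp add: I_def nn_integral_cmult[symmetric] ennreal_mult F0 g0 mult.assoc)
  then have "(\<integral>\<^sup>+v. ennreal (norm v^2) * (\<integral>\<^sup>+w. \<integral>\<^sup>+\<theta>. ennreal (g (w * cos \<theta> - v$j * sin \<theta>) * F (thermo_upd j w \<theta> v))
      * indicator {0..2*pi} \<theta> \<partial>lborel \<partial>lborel) \<partial>lborel) = (\<integral>\<^sup>+v. \<integral>\<^sup>+w. \<integral>\<^sup>+\<theta>. I v w \<theta> \<partial>lborel \<partial>lborel \<partial>lborel)"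
    by simp
  also have "\<dots> = (\<integral>\<^sup>+v. \<integral>\<^sup>+\<theta>. \<integral>\<^sup>+w. I v w \<theta> \<partial>lborel \<partial>lborel \<partial>lborel)"
    by (intro nn_integral_cong lborel_pair.Fubini'[symmetric]) (unfold I_def, measurable)
  also have "\<dots> = (\<integral>\<^sup>+\<theta>. \<integral>\<^sup>+v. \<integral>\<^sup>+w. I v w \<theta> \<partial>lborel \<partial>lborel \<partial>lborel)"
    by (rule lborel_pair.Fubini'[symmetric]) (simp add: split_beta')
  also have "\<dots> = (\<integral>\<^sup>+\<theta>. \<integral>\<^sup>+u. \<integral>\<^sup>+w. K \<theta> u w \<partial>lborel \<partial>lborel \<partial>lborel)"
  proof (rule nn_integral_cong)
    fix \<theta> :: real
    show "(\<integral>\<^sup>+v. \<integral>\<^sup>+w. I v w \<theta> \<partial>lborel \<partial>lborel) = (\<integral>\<^sup>+u. \<integral>\<^sup>+w. K \<theta> u w \<partial>lborel \<partial>lborel)"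
      using nn_integral_energy_thermo_upd[of F g \<theta> j]
      by (simp add: I_def K_def nn_integral_multc)
  qed
  also have "\<dots> = (\<integral>\<^sup>+u. \<integral>\<^sup>+w. \<integral>\<^sup>+\<theta>. K \<theta> u w \<partial>lborel \<partial>lborel \<partial>lborel)"
    by (simp add: lborel_pair.Fubini'[of "\<lambda>u \<theta>. \<integral>\<^sup>+w. K \<theta> u w \<partial>lborel"] lborel_pair.Fubini'[of "\<lambda>w \<theta>. K \<theta> _ w"])
  also have "\<dots> = (\<integral>\<^sup>+u. \<integral>\<^sup>+w. ennreal (2*pi) * (ennreal (F u * (norm u^2 - (u$j)^2/2)) * ennreal (g w))
      + ennreal pi * (ennreal (F u) * ennreal (w^2 * g w)) \<partial>lborel \<partial>lborel)"
  proof (intro nn_integral_cong)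
    fix u :: "(real,'n) vec" and w :: real
    have B: "0 \<le> norm u^2 - (u$j)^2" using vec_nth_power2_le_norm[of u j] by simp
    have "(\<integral>\<^sup>+\<theta>. K \<theta> u w \<partial>lborel)
        = ennreal (g w * F u) * (\<integral>\<^sup>+\<theta>. ennreal (norm u^2 - (u$j)^2 + (u$j * cos \<theta> - w * sin \<theta>)^2) * indicator {0..2*pi} \<theta> \<partial>lborel)"
      using B by (simp add: K_def ennreal_mult F0 g0 mult.assoc nn_integral_cmult)
    also have "\<dots> = ennreal (g w * F u) * ennreal (2*pi*(norm u^2 - (u$j)^2) + pi*(u$j)^2 + pi*w^2)"
      by (simp only: nn_integral_trig_square[OF B])
    also have "\<dots> = ennreal (g w * F u * (2*pi*(norm u^2 - (u$j)^2) + pi*(u$j)^2 + pi*w^2))"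
      using B F0 g0 by (intro ennreal_mult[symmetric]) auto
    also have "\<dots> = ennreal (2*pi * (F u * (norm u^2 - (u$j)^2/2) * g w) + pi * (F u * (w^2 * g w)))"
      by (simp add: algebra_simps)
    also have "\<dots> = ennreal (2*pi) * (ennreal (F u * (norm u^2 - (u$j)^2/2)) * ennreal (g w))
        + ennreal pi * (ennreal (F u) * ennreal (w^2 * g w))"
    proof -
      have B': "0 \<le> norm u^2 - (u$j)^2/2" using B zero_le_power2[of "u$j"] by linarith
      have "0 \<le> 2*pi * (F u * (norm u^2 - (u$j)^2/2) * g w)" "0 \<le> pi * (F u * (w^2 * g w))"
        using B' F0[of u] g0[of w] by simp_all
      then show ?thesis
        using B' F0[of u] g0[of w] by (simp add: ennreal_plus ennreal_mult)
    qed
    finally show "(\<integral>\<^sup>+\<theta>. K \<theta> u w \<partial>lborel) = \<dots>" .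
  qed
  also have "\<dots> = ennreal (2*pi) * ((\<integral>\<^sup>+u. ennreal (F u * (norm u^2 - (u$j)^2/2)) \<partial>lborel) * (\<integral>\<^sup>+w. ennreal (g w) \<partial>lborel))
     + ennreal pi * ((\<integral>\<^sup>+u. ennreal (F u) \<partial>lborel) * (\<integral>\<^sup>+w. ennreal (w^2 * g w) \<partial>lborel))"
    by (rule nn_integral_separable) measurable
  finally show ?thesis .
qed

lemma integrable_mult_enn2real:
  fixes X :: "'a \<Rightarrow> ennreal" and w :: "'a \<Rightarrow> real"
  assumes [measurable]: "X \<in> borel_measurable M" "w \<in> borel_measurable M"
    and w0: "\<And>x. 0 \<le> w x" and fin: "(\<integral>\<^sup>+x. ennreal (w x) * X x \<partial>M) < \<infinity>"
  shows "integrable M (\<lambda>x. w x * enn2real (X x))"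
    and "(\<integral>x. w x * enn2real (X x) \<partial>M) = enn2real (\<integral>\<^sup>+x. ennreal (w x) * X x \<partial>M)"
proof -
  have "AE x in M. ennreal (w x) * X x \<noteq> \<infinity>"
    by (rule nn_integral_PInf_AE) (use fin in auto)
  then have "AE x in M. ennreal (w x * enn2real (X x)) = ennreal (w x) * X x"
    by eventually_elim
      (use w0 in \<open>auto simp: ennreal_mult ennreal_mult_eq_top_iff ennreal_enn2real_if\<close>)
  then have eq: "(\<integral>\<^sup>+x. ennreal (w x * enn2real (X x)) \<partial>M) = (\<integral>\<^sup>+x. ennreal (w x) * X x \<partial>M)"
    by (rule nn_integral_cong_AE)
  show "integrable M (\<lambda>x. w x * enn2real (X x))"
    by (rule integrableI_nonneg) (use eq fin w0 in auto)
  show "(\<integral>x. w x * enn2real (X x) \<partial>M) = enn2real (\<integral>\<^sup>+x. ennreal (w x) * X x \<partial>M)"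
    by (subst integral_eq_nn_integral) (use w0 eq in auto)
qed

lemma set_integral_nonneg_eq_nn_integral:
  fixes f :: "real \<Rightarrow> real"
  assumes [measurable]: "f \<in> borel_measurable borel" "A \<in> sets borel" and f0: "\<And>x. 0 \<le> f x"
  shows "(LINT \<theta>:A|lborel. f \<theta>) = enn2real (\<integral>\<^sup>+\<theta>. ennreal (f \<theta>) * indicator A \<theta> \<partial>lborel)"
proof -
  have "(LINT \<theta>:A|lborel. f \<theta>) = enn2real (\<integral>\<^sup>+\<theta>. ennreal (indicator A \<theta> * f \<theta>) \<partial>lborel)"
    unfolding set_lebesgue_integral_def by (simp add: integral_eq_nn_integral f0)
  also have "(\<integral>\<^sup>+\<theta>. ennreal (indicator A \<theta> * f \<theta>) \<partial>lborel) = (\<integral>\<^sup>+\<theta>. ennreal (f \<theta>) * indicator A \<theta> \<partial>lborel)"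
    by (intro nn_integral_cong) (auto simp: indicator_def)
  finally show ?thesis .
qed

lemma card_less_pairs: "card {(i::'n::{finite,linorder}, j). i < j} = CARD('n) choose 2"
proof -
  have "bij_betw (\<lambda>(i,j). {i,j}) {(i::'n, j). i < j} {B. B \<subseteq> UNIV \<and> card B = 2}"
  proof (rule bij_betwI')
    fix x y assume "x \<in> {(i::'n, j). i < j}" "y \<in> {(i::'n, j). i < j}"
    then show "((case x of (i, j) \<Rightarrow> {i, j}) = (case y of (i, j) \<Rightarrow> {i, j})) = (x = y)"
      by (auto simp: doubleton_eq_iff)
  next
    fix B :: "'n set" assume "B \<in> {B. B \<subseteq> UNIV \<and> card B = 2}"
    then obtain a b where ab: "B = {a,b}" "a \<noteq> b" by (auto simp: card_2_iff)
    then show "\<exists>x\<in>{(i::'n, j). i < j}. B = (case x of (i, j) \<Rightarrow> {i, j})"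
      by (cases "a < b") (auto intro: bexI[of _ "(a,b)"] bexI[of _ "(b,a)"] simp: neq_iff)
  qed auto
  then have "card {(i::'n, j). i < j} = card {B. B \<subseteq> (UNIV::'n set) \<and> card B = 2}"
    by (rule bij_betw_same_card)
  also have "\<dots> = CARD('n) choose 2" by (rule n_subsets) simp
  finally show ?thesis .
qed

context
  fixes F :: "(real,'n::{finite,linorder}) vec \<Rightarrow> real" and g :: "real \<Rightarrow> real"
  assumes F_meas [measurable]: "F \<in> borel_measurable borel" and F_nonneg: "\<And>v. 0 \<le> F v"
    and F_weighted: "integrable lborel (\<lambda>v. (1 + norm v ^ 2) * F v)" and F_mass: "(LINT v|lborel. F v) = 1"
    and g_meas [measurable]: "g \<in> borel_measurable borel" and g_nonneg: "\<And>w. 0 \<le> g w"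
    and g_int: "integrable lborel g" and g_mass: "(LINT w|lborel. g w) = 1"
    and g_mom2: "integrable lborel (\<lambda>w. w\<^sup>2 * g w)"
begin

lemma density_le_weighted: "F v \<le> (1 + norm v^2) * F v" "norm v^2 * F v \<le> (1 + norm v^2) * F v"
  using F_nonneg[of v] mult_nonneg_nonneg[OF zero_le_power2[of "norm v"] F_nonneg[of v]]
  by (simp_all add: algebra_simps)

lemma integrable_density: "integrable lborel F"
  by (rule Bochner_Integration.integrable_bound[OF F_weighted])
    (auto simp: F_nonneg density_le_weighted intro!: AE_I2)

lemma integrable_energy: "integrable lborel (\<lambda>v. norm v^2 * F v)"
  by (rule Bochner_Integration.integrable_bound[OF F_weighted])
    (auto simp: F_nonneg density_le_weighted intro!: AE_I2)

lemma integrable_coord_energy: "integrable lborel (\<lambda>v. (v$j)^2 * F v)"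
  by (rule Bochner_Integration.integrable_bound[OF integrable_energy])
    (use vec_nth_power2_le_norm F_nonneg in \<open>auto intro!: AE_I2 mult_right_mono\<close>)

lemma nn_integral_density: "(\<integral>\<^sup>+v. ennreal (F v) \<partial>lborel) = 1"
  using nn_integral_eq_integral[OF integrable_density] F_nonneg F_mass by simp

lemma nn_integral_energy: "(\<integral>\<^sup>+v. ennreal (norm v^2 * F v) \<partial>lborel) = ennreal (LINT v|lborel. norm v^2 * F v)"
  using nn_integral_eq_integral[OF integrable_energy] F_nonneg by simp

lemma nn_integral_g: "(\<integral>\<^sup>+w. ennreal (g w) \<partial>lborel) = 1"
  using nn_integral_eq_integral[OF g_int] g_nonneg g_mass by simp

lemma nn_integral_g_moment: "(\<integral>\<^sup>+w. ennreal (w^2 * g w) \<partial>lborel) = ennreal (LINT w|lborel. w^2 * g w)"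
  using nn_integral_eq_integral[OF g_mom2] g_nonneg by simp

definition pair_rot_mass :: "'n \<Rightarrow> 'n \<Rightarrow> (real,'n) vec \<Rightarrow> ennreal" where
  "pair_rot_mass i j v = (\<integral>\<^sup>+\<theta>. ennreal (F (pair_rot i j \<theta> v)) * indicator {0..2*pi} \<theta> \<partial>lborel)"

lemma borel_measurable_pair_rot_mass [measurable]: "pair_rot_mass i j \<in> borel_measurable borel"
  unfolding pair_rot_mass_def by measurable

lemma kac_Q_eq_pair_rot_mass: "kac_Q F v = (1 / real (CARD('n) choose 2)) *
     (\<Sum>(i,j) \<in> {(i,j). i < j}. (1 / (2*pi)) * enn2real (pair_rot_mass i j v))"
  unfolding kac_Q_def pair_rot_mass_def
  by (intro arg_cong2[where f="(*)"] refl sum.cong) (auto simp: F_nonneg set_integral_nonneg_eq_nn_integral)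

lemma energy_pair_rot_mass:
  assumes "i \<noteq> j"
  shows "integrable lborel (\<lambda>v. norm v^2 * enn2real (pair_rot_mass i j v))"
    and "(LINT v|lborel. norm v^2 * enn2real (pair_rot_mass i j v)) = 2*pi * (LINT v|lborel. norm v^2 * F v)"
proof -
  have eq: "(\<integral>\<^sup>+v. ennreal (norm v^2) * pair_rot_mass i j v \<partial>lborel)
      = ennreal (2*pi) * ennreal (LINT v|lborel. norm v^2 * F v)"
    unfolding pair_rot_mass_def nn_integral_energy_pair_rot[OF assms F_meas F_nonneg] nn_integral_energy ..
  have fin: "(\<integral>\<^sup>+v. ennreal (norm v^2) * pair_rot_mass i j v \<partial>lborel) < \<infinity>"
    unfolding eq by (simp add: ennreal_mult_less_top)
  show "integrable lborel (\<lambda>v. norm v^2 * enn2real (pair_rot_mass i j v))"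
    by (rule integrable_mult_enn2real(1)[OF _ _ _ fin]) auto
  have "0 \<le> (LINT v|lborel. norm v^2 * F v)"
    using F_nonneg by (intro integral_nonneg_AE) auto
  then show "(LINT v|lborel. norm v^2 * enn2real (pair_rot_mass i j v)) = 2*pi * (LINT v|lborel. norm v^2 * F v)"
    using integrable_mult_enn2real(2)[OF _ _ _ fin] eq by (simp add: enn2real_mult)
qed

lemma energy_kac_Q:
  assumes "CARD('n) \<ge> 2"
  shows "integrable lborel (\<lambda>v. norm v^2 * kac_Q F v)"
    and "(LINT v|lborel. norm v^2 * kac_Q F v) = (LINT v|lborel. norm v^2 * F v)"
proof -
  define P where "P = {(i::'n, j). i < j}"
  define c where "c = 1 / real (CARD('n) choose 2)"
  have eq: "norm v^2 * kac_Q F v = c * (\<Sum>p\<in>P. (1/(2*pi)) * (norm v^2 * enn2real (pair_rot_mass (fst p) (snd p) v)))" for v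
    unfolding kac_Q_eq_pair_rot_mass c_def P_def by (simp add: sum_distrib_left split_beta' algebra_simps)
  have ij: "p \<in> P \<Longrightarrow> fst p \<noteq> snd p" for p by (auto simp: P_def)
  show "integrable lborel (\<lambda>v. norm v^2 * kac_Q F v)"
    unfolding eq using energy_pair_rot_mass(1)[OF ij] by (intro integrable_mult_right integrable_sum) auto
  have "(LINT v|lborel. norm v^2 * kac_Q F v) = c * (\<Sum>p\<in>P. (LINT v|lborel. norm v^2 * F v))"
    unfolding eq using energy_pair_rot_mass[OF ij] by (simp add: integral_sum)
  also have "\<dots> = c * real (CARD('n) choose 2) * (LINT v|lborel. norm v^2 * F v)"
    by (simp add: P_def card_less_pairs)
  also have "c * real (CARD('n) choose 2) = 1"
    using assms by (simp add: c_def)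
  finally show "(LINT v|lborel. norm v^2 * kac_Q F v) = (LINT v|lborel. norm v^2 * F v)" by simp
qed

definition thermo_angle_mass :: "'n \<Rightarrow> (real,'n) vec \<Rightarrow> real \<Rightarrow> ennreal" where
  "thermo_angle_mass j v w = (\<integral>\<^sup>+\<theta>. ennreal (g (w * cos \<theta> - v$j * sin \<theta>) * F (thermo_upd j w \<theta> v))
     * indicator {0..2*pi} \<theta> \<partial>lborel)"

lemma borel_measurable_thermo_angle_mass [measurable]:
  "case_prod (thermo_angle_mass j) \<in> borel_measurable (lborel \<Otimes>\<^sub>M lborel)"
  "thermo_angle_mass j v \<in> borel_measurable borel"
  unfolding thermo_angle_mass_def split_beta' by measurable

lemma kac_R_eq_nn_integral:
  "kac_R g j F v = enn2real (\<integral>\<^sup>+w. ennreal (1/(2*pi) * enn2real (thermo_angle_mass j v w)) \<partial>lborel)"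
proof -
  have "kac_R g j F v = (LINT w|lborel. 1/(2*pi) * enn2real (thermo_angle_mass j v w))"
    unfolding kac_R_def thermo_angle_mass_def
    by (intro Bochner_Integration.integral_cong refl arg_cong2[where f="(*)"] set_integral_nonneg_eq_nn_integral)
      (auto simp: F_nonneg g_nonneg)
  also have "\<dots> = enn2real (\<integral>\<^sup>+w. ennreal (1/(2*pi) * enn2real (thermo_angle_mass j v w)) \<partial>lborel)"
    by (rule integral_eq_nn_integral) auto
  finally show ?thesis .
qed

lemma energy_minus_half_coord_nonneg: "0 \<le> F v * (norm v^2 - (v$j)^2/2)"
proof -
  have "0 \<le> norm v^2 - (v$j)^2/2"
    using vec_nth_power2_le_norm[of v j] zero_le_power2[of "v$j"] by linarith
  then show ?thesis using F_nonneg[of v] by simp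
qed

lemma integrable_energy_minus_half_coord: "integrable lborel (\<lambda>v. F v * (norm v^2 - (v$j)^2/2))"
  by (rule Bochner_Integration.integrable_bound[OF integrable_energy])
    (auto intro!: AE_I2 simp: energy_minus_half_coord_nonneg F_nonneg mult.commute mult_left_mono)

text \<open>The thermostat in direction \<open>j\<close> replaces \<open>v$j\<^sup>2\<close> by its average \<open>(v$j\<^sup>2 + K\<^sub>g)/2\<close>.\<close>
lemma energy_kac_R:
  shows "integrable lborel (\<lambda>v. norm v^2 * kac_R g j F v)"
    and "(LINT v|lborel. norm v^2 * kac_R g j F v)
       = (LINT v|lborel. F v * (norm v^2 - (v$j)^2/2)) + (LINT w|lborel. w^2 * g w) / 2"
proof -
  define A where "A = (LINT v|lborel. F v * (norm v^2 - (v$j)^2/2))"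
  define Kg where "Kg = (LINT w|lborel. w^2 * g w)"
  define M where "M v = (\<integral>\<^sup>+w. thermo_angle_mass j v w \<partial>lborel)" for v
  define R where "R v = (\<integral>\<^sup>+w. ennreal (1/(2*pi) * enn2real (thermo_angle_mass j v w)) \<partial>lborel)" for v
  have [measurable]: "M \<in> borel_measurable borel" "R \<in> borel_measurable borel"
    unfolding M_def R_def by measurable
  have A0: "0 \<le> A" and Kg0: "0 \<le> Kg"
    unfolding A_def Kg_def
    by (auto intro!: integral_nonneg_AE simp: energy_minus_half_coord_nonneg g_nonneg)
  have "(\<integral>\<^sup>+v. ennreal (F v * (norm v^2 - (v$j)^2/2)) \<partial>lborel) = ennreal A"
    unfolding A_def
    by (rule nn_integral_eq_integral[OF integrable_energy_minus_half_coord])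
      (simp add: energy_minus_half_coord_nonneg)
  then have M_energy: "(\<integral>\<^sup>+v. ennreal (norm v^2) * M v \<partial>lborel) = ennreal (2*pi*A + pi*Kg)"
    unfolding M_def thermo_angle_mass_def nn_integral_energy_thermo[OF F_meas F_nonneg g_meas g_nonneg]
    using A0 Kg0 by (simp add: nn_integral_density nn_integral_g nn_integral_g_moment Kg_def ennreal_plus ennreal_mult)
  have "AE v in lborel. ennreal (norm v^2) * M v \<noteq> \<infinity>"
    by (rule nn_integral_PInf_AE) (use M_energy in auto)
  then have "AE v in lborel. ennreal (norm v^2) * R v = ennreal (1/(2*pi)) * (ennreal (norm v^2) * M v)"
  proof eventually_elim
    case (elim v)
    show ?case
    proof (cases "norm v = 0")
      case False
      then have "AE w in lborel. thermo_angle_mass j v w \<noteq> \<infinity>"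
        using elim by (intro nn_integral_PInf_AE) (auto simp: M_def ennreal_mult_eq_top_iff)
      then have "AE w in lborel. ennreal (1/(2*pi) * enn2real (thermo_angle_mass j v w))
          = ennreal (1/(2*pi)) * thermo_angle_mass j v w"
        by eventually_elim (subst ennreal_mult, auto simp: less_top[symmetric])
      then have "R v = ennreal (1/(2*pi)) * M v"
        unfolding R_def M_def by (simp add: nn_integral_cong_AE nn_integral_cmult)
      then show ?thesis by (simp add: mult.left_commute)
    qed simp
  qed
  then have "(\<integral>\<^sup>+v. ennreal (norm v^2) * R v \<partial>lborel)
      = (\<integral>\<^sup>+v. ennreal (1/(2*pi)) * (ennreal (norm v^2) * M v) \<partial>lborel)"
    by (rule nn_integral_cong_AE)
  also have "\<dots> = ennreal (1/(2*pi)) * ennreal (2*pi*A + pi*Kg)"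
    by (subst nn_integral_cmult) (auto simp: M_energy)
  also have "\<dots> = ennreal (1/(2*pi) * (2*pi*A + pi*Kg))"
    using A0 Kg0 by (intro ennreal_mult[symmetric]) auto
  finally have R_energy: "(\<integral>\<^sup>+v. ennreal (norm v^2) * R v \<partial>lborel) = ennreal (1/(2*pi) * (2*pi*A + pi*Kg))" .
  have kac_R: "kac_R g j F v = enn2real (R v)" for v
    unfolding R_def by (rule kac_R_eq_nn_integral)
  have fin: "(\<integral>\<^sup>+v. ennreal (norm v^2) * R v \<partial>lborel) < \<infinity>"
    unfolding R_energy by simp
  show "integrable lborel (\<lambda>v. norm v^2 * kac_R g j F v)"
    unfolding kac_R by (rule integrable_mult_enn2real(1)[OF _ _ _ fin]) auto
  have "(LINT v|lborel. norm v^2 * kac_R g j F v) = 1/(2*pi) * (2*pi*A + pi*Kg)"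
    unfolding kac_R using integrable_mult_enn2real(2)[OF _ _ _ fin] R_energy A0 Kg0 by simp
  also have "1/(2*pi) * (2*pi*A + pi*Kg) = A + Kg/2"
    by (simp add: field_simps)
  finally show "(LINT v|lborel. norm v^2 * kac_R g j F v)
      = (LINT v|lborel. F v * (norm v^2 - (v$j)^2/2)) + (LINT w|lborel. w^2 * g w) / 2"
    unfolding A_def Kg_def .
qed

lemma borel_measurable_kac_gen: "kac_gen lam mu g F \<in> borel_measurable borel"
proof -
  have [measurable]: "kac_Q F \<in> borel_measurable borel" "kac_R g j F \<in> borel_measurable borel" for j
    unfolding kac_Q_eq_pair_rot_mass[abs_def] kac_R_eq_nn_integral[abs_def] split_beta' by measurable
  show ?thesis
    unfolding kac_gen_def[abs_def] by measurable
qed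

lemma energy_kac_gen:
  assumes "CARD('n) \<ge> 2"
  shows "integrable lborel (\<lambda>v. norm v^2 * kac_gen lam mu g F v)"
    and "(LINT v|lborel. norm v^2 * kac_gen lam mu g F v)
       = - (mu/2) * ((LINT v|lborel. norm v^2 * F v) - real CARD('n) * (LINT w|lborel. w^2 * g w))"
proof -
  define N where "N = real CARD('n)"
  define K where "K = (LINT v|lborel. norm v^2 * F v)"
  define Kg where "Kg = (LINT w|lborel. w^2 * g w)"
  define C where "C j = (LINT v|lborel. (v$j)^2 * F v)" for j
  have eq: "norm v^2 * kac_gen lam mu g F v = - lam * N * (norm v^2 * F v - norm v^2 * kac_Q F v)
      - mu * (\<Sum>j\<in>UNIV. norm v^2 * F v - norm v^2 * kac_R g j F v)" for v
    unfolding kac_gen_def N_def by (simp add: sum_distrib_left algebra_simps)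
  note Q = energy_kac_Q[OF assms] and R = energy_kac_R
  show "integrable lborel (\<lambda>v. norm v^2 * kac_gen lam mu g F v)"
    unfolding eq using Q(1) R(1) integrable_energy
    by (intro Bochner_Integration.integrable_diff integrable_mult_right integrable_sum) auto
  have R_coord: "(LINT v|lborel. F v * (norm v^2 - (v$j)^2/2)) = K - C j / 2" for j
  proof -
    have "(LINT v|lborel. F v * (norm v^2 - (v$j)^2/2)) = (LINT v|lborel. norm v^2 * F v - (v$j)^2 * F v / 2)"
      by (rule Bochner_Integration.integral_cong) (auto simp: algebra_simps)
    also have "\<dots> = K - C j / 2"
      using integrable_energy integrable_coord_energy[of j] by (simp add: K_def C_def)
    finally show ?thesis .
  qed
  have sum_C: "(\<Sum>j\<in>UNIV. C j) = K"
    using integrable_coord_energy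
    by (simp add: C_def K_def norm_vec_power2 sum_distrib_right integral_sum[symmetric])
  have "(LINT v|lborel. norm v^2 * kac_gen lam mu g F v)
      = - lam * N * (K - K) - mu * (\<Sum>j\<in>UNIV. K - (K - C j / 2 + Kg / 2))"
    unfolding eq using Q R integrable_energy
    by (simp add: integral_sum integrable_sum R_coord K_def Kg_def)
  also have "\<dots> = - (mu/2) * ((\<Sum>j\<in>UNIV. C j) - N * Kg)"
    by (simp add: sum_subtractf sum_divide_distrib[symmetric] N_def algebra_simps)
  finally show "(LINT v|lborel. norm v^2 * kac_gen lam mu g F v)
       = - (mu/2) * ((LINT v|lborel. norm v^2 * F v) - real CARD('n) * (LINT w|lborel. w^2 * g w))"
    unfolding sum_C K_def N_def Kg_def .
qed

end

section \<open>Evolution of the kinetic energy\<close>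

lemma borel_measurable_weighted_integrable:
  fixes f :: "(real,'n::finite) vec \<Rightarrow> real"
  assumes "integrable lborel (\<lambda>v. (1 + norm v ^ 2) * f v)"
  shows "f \<in> borel_measurable borel"
proof -
  have "(\<lambda>v. (1 + norm v ^ 2) * f v) \<in> borel_measurable borel"
    using borel_measurable_integrable[OF assms] by simp
  then have "(\<lambda>v. ((1 + norm v ^ 2) * f v) / (1 + norm v ^ 2)) \<in> borel_measurable borel"
    by measurable
  moreover have "1 + norm v ^ 2 \<noteq> 0" for v :: "(real,'n) vec"
    by (metis add_pos_nonneg zero_le_power2 zero_less_one less_irrefl)
  ultimately show ?thesis by simp
qed

lemma abs_second_moment_le_wnorm:
  fixes f :: "(real,'n::finite) vec \<Rightarrow> real"
  assumes "integrable lborel (\<lambda>v. (1 + norm v ^ 2) * f v)"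
  shows "\<bar>LINT v|lborel. norm v^2 * f v\<bar> \<le> wnorm f"
proof -
  have [measurable]: "f \<in> borel_measurable borel"
    using borel_measurable_weighted_integrable[OF assms] .
  have weighted: "integrable lborel (\<lambda>v. (1 + norm v ^ 2) * \<bar>f v\<bar>)"
    using integrable_abs[OF assms] by (simp add: abs_mult)
  then have "integrable lborel (\<lambda>v. \<bar>norm v^2 * f v\<bar>)"
    by (rule Bochner_Integration.integrable_bound) (auto intro!: AE_I2 simp: abs_mult mult_right_mono)
  then have "\<bar>LINT v|lborel. norm v^2 * f v\<bar> \<le> (LINT v|lborel. \<bar>norm v^2 * f v\<bar>)"
    by (intro integral_abs_bound)
  also have "\<dots> \<le> wnorm f"
    unfolding wnorm_def
    using \<open>integrable lborel (\<lambda>v. \<bar>norm v^2 * f v\<bar>)\<close> weighted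
    by (rule integral_mono) (simp add: abs_mult mult_right_mono)
  finally show ?thesis .
qed

lemma kinetic_energy_has_derivative:
  fixes F :: "real \<Rightarrow> (real,'n::finite) vec \<Rightarrow> real"
  assumes F_weighted: "\<And>s. 0 \<le> s \<Longrightarrow> integrable lborel (\<lambda>v. (1 + norm v ^ 2) * F s v)"
    and G_meas: "G \<in> borel_measurable borel"
    and G_weighted: "integrable lborel (\<lambda>v. (1 + norm v ^ 2) * \<bar>G v\<bar>)"
    and lim: "((\<lambda>h. wnorm (\<lambda>v. (F (t + h) v - F t v) / h - G v)) \<longlongrightarrow> 0) (at 0 within {h. 0 \<le> t + h})"
    and t: "0 \<le> t"
  shows "(kinetic_energy F has_real_derivative (LINT v|lborel. norm v^2 * G v)) (at t within {0..})"
proof -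
  define D where "D = (LINT v|lborel. norm v^2 * G v)"
  have [measurable]: "G \<in> borel_measurable borel" by (fact G_meas)
  have "integrable lborel (\<lambda>v. (1 + norm v ^ 2) * G v)"
    by (rule Bochner_Integration.integrable_bound[OF G_weighted]) (auto intro!: AE_I2 simp: abs_mult)
  have energy: "integrable lborel (\<lambda>v. norm v^2 * f v)"
    if "integrable lborel (\<lambda>v. (1 + norm v ^ 2) * f v)" for f :: "(real,'n) vec \<Rightarrow> real"
  proof -
    have [measurable]: "f \<in> borel_measurable borel"
      using borel_measurable_weighted_integrable[OF that] .
    show ?thesis
      by (rule Bochner_Integration.integrable_bound[OF that])
        (auto intro!: AE_I2 simp: abs_mult mult_right_mono)
  qed
  have bound: "\<bar>(kinetic_energy F (t + h) - kinetic_energy F t) / h - D\<bar>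
      \<le> wnorm (\<lambda>v. (F (t + h) v - F t v) / h - G v)" if h: "0 \<le> t + h" for h
  proof -
    define \<Delta> where "\<Delta> v = (F (t + h) v - F t v) / h - G v" for v
    have "(\<lambda>v. (1 + norm v ^ 2) * \<Delta> v)
        = (\<lambda>v. (1 + norm v ^ 2) * F (t + h) v / h - (1 + norm v ^ 2) * F t v / h - (1 + norm v ^ 2) * G v)"
      by (auto simp: \<Delta>_def field_simps diff_divide_distrib)
    then have \<Delta>_weighted: "integrable lborel (\<lambda>v. (1 + norm v ^ 2) * \<Delta> v)"
      using F_weighted[OF h] F_weighted[OF t] \<open>integrable lborel (\<lambda>v. (1 + norm v ^ 2) * G v)\<close>
      by (simp add: integrable_divide)
    have "(kinetic_energy F (t + h) - kinetic_energy F t) / h - D = (LINT v|lborel. norm v^2 * \<Delta> v)"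
    proof -
      have "(LINT v|lborel. norm v^2 * \<Delta> v)
          = (LINT v|lborel. norm v^2 * F (t + h) v / h - norm v^2 * F t v / h - norm v^2 * G v)"
        by (rule Bochner_Integration.integral_cong) (auto simp: \<Delta>_def field_simps diff_divide_distrib)
      then show ?thesis
        using energy[OF F_weighted[OF h]] energy[OF F_weighted[OF t]]
          energy[OF \<open>integrable lborel (\<lambda>v. (1 + norm v ^ 2) * G v)\<close>]
        by (simp add: kinetic_energy_def D_def diff_divide_distrib integrable_divide)
    qed
    then show ?thesis
      using abs_second_moment_le_wnorm[OF \<Delta>_weighted] by (simp add: \<Delta>_def)
  qed
  have "((\<lambda>h. (kinetic_energy F (t + h) - kinetic_energy F t) / h - D) \<longlongrightarrow> 0) (at 0 within {h. 0 \<le> t + h})"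
    by (rule Lim_null_comparison[OF _ lim]) (use bound in \<open>auto simp: eventually_at_filter\<close>)
  then have "((\<lambda>h. kinetic_energy F (t + h)) has_real_derivative D) (at 0 within {h. 0 \<le> t + h})"
    by (simp add: has_field_derivative_iff LIM_zero_iff)
  then have "(kinetic_energy F has_real_derivative D) (at (t + 0) within (+) t ` {h. 0 \<le> t + h})"
    by (subst DERIV_at_within_shift) simp
  moreover have "(+) t ` {h. 0 \<le> t + h} = {0..}"
    by (auto simp: image_iff intro!: exI[of _ "x - t" for x])
  ultimately show ?thesis by (simp add: D_def)
qed

lemma linear_ode_exp_solution:
  fixes e :: "real \<Rightarrow> real"
  assumes deriv: "\<And>s. 0 \<le> s \<Longrightarrow> (e has_real_derivative (- c * e s)) (at s within {0..})"
    and t: "0 \<le> t"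
  shows "e t = e 0 * exp (- c * t)"
proof -
  define \<phi> where "\<phi> s = e s * exp (c * s)" for s
  have "(\<phi> has_derivative (\<lambda>h. 0)) (at s within {0..})" if "s \<in> {0..}" for s
  proof -
    have "(\<phi> has_real_derivative 0) (at s within {0..})"
      unfolding \<phi>_def using that
      by (auto intro!: derivative_eq_intros deriv simp: algebra_simps)
    then show ?thesis by (simp add: has_field_derivative_def mult_zero_left[abs_def])
  qed
  then obtain k where "\<forall>s\<in>{0::real..}. \<phi> s = k"
    using has_derivative_zero_constant[OF convex_real_interval(1)] by blast
  then have "\<phi> t = \<phi> 0" using t by simp
  then show ?thesis
    by (simp add: \<phi>_def exp_minus field_simps)
qed

lemma kac_solution_kinetic_energy_has_derivative:
  fixes F :: "real \<Rightarrow> (real, 'n::{finite,linorder}) vec \<Rightarrow> real"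
  assumes N2: "CARD('n) \<ge> 2"
    and g_meas: "g \<in> borel_measurable borel" and g_nonneg: "\<And>w. 0 \<le> g w"
    and g_int: "integrable lborel g" and g_mass: "(LINT w|lborel. g w) = 1"
    and g_mom2: "integrable lborel (\<lambda>w. w\<^sup>2 * g w)"
    and sol: "kac_solution lam mu g F" and s: "0 \<le> s"
  shows "(kinetic_energy F has_real_derivative
           - (mu/2) * (kinetic_energy F s - real CARD('n) * (LINT w|lborel. w\<^sup>2 * g w))) (at s within {0..})"
proof -
  have F_weighted: "integrable lborel (\<lambda>v. (1 + norm v ^ 2) * F s' v)" if "0 \<le> s'" for s'
    using sol that unfolding kac_solution_def by blast
  have sol_s: "\<And>v. 0 \<le> F s v" "(LINT v|lborel. F s v) = 1"
    "integrable lborel (\<lambda>v. (1 + norm v ^ 2) * \<bar>kac_gen lam mu g (F s) v\<bar>)"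
    "((\<lambda>h. wnorm (\<lambda>v. (F (s + h) v - F s v) / h - kac_gen lam mu g (F s) v)) \<longlongrightarrow> 0) (at 0 within {h. 0 \<le> s + h})"
    using sol s unfolding kac_solution_def by blast+
  note hyps = borel_measurable_weighted_integrable[OF F_weighted[OF s]] sol_s(1) F_weighted[OF s] sol_s(2)
    g_meas g_nonneg g_int g_mass g_mom2
  show ?thesis
    using kinetic_energy_has_derivative[OF F_weighted borel_measurable_kac_gen[OF hyps] sol_s(3,4) s]
    by (simp add: energy_kac_gen(2)[OF hyps N2] kinetic_energy_def)
qed

theorem lemma1:
  fixes lam mu :: real and g :: "real \<Rightarrow> real"
    and F :: "real \<Rightarrow> (real, 'n::{finite,linorder}) vec \<Rightarrow> real"
  assumes N2: "CARD('n) \<ge> 2"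
    and lam: "lam > 0" and mu: "mu > 0"
    and g_meas: "g \<in> borel_measurable borel"
    and g_nonneg: "\<forall>w. g w \<ge> 0"
    and g_int: "integrable lborel g" and g_mass: "(LINT w|lborel. g w) = 1"
    and g_L2: "integrable lborel (\<lambda>w. (g w)\<^sup>2)"
    and g_mean_int: "integrable lborel (\<lambda>w. w * g w)"
    and g_mean: "(LINT w|lborel. w * g w) = 0"
    and g_mom2: "integrable lborel (\<lambda>w. w\<^sup>2 * g w)"
    and sol: "kac_solution lam mu g F"
  shows "\<forall>t\<ge>0. \<bar>kinetic_energy F t - real CARD('n) * (LINT w|lborel. w\<^sup>2 * g w)\<bar>
            \<le> \<bar>kinetic_energy F 0 - real CARD('n) * (LINT w|lborel. w\<^sup>2 * g w)\<bar> * exp (- mu * t / 2)"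
proof (intro allI impI)
  fix t :: real assume t: "0 \<le> t"
  define E where "E = real CARD('n) * (LINT w|lborel. w\<^sup>2 * g w)"
  have "((\<lambda>s. kinetic_energy F s - E) has_real_derivative - (mu/2) * (kinetic_energy F s - E)) (at s within {0..})"
    if "0 \<le> s" for s
    using kac_solution_kinetic_energy_has_derivative[OF N2 g_meas _ g_int g_mass g_mom2 sol that] g_nonneg
    by (auto simp: E_def intro!: derivative_eq_intros)
  then have "kinetic_energy F t - E = (kinetic_energy F 0 - E) * exp (- (mu/2) * t)"
    using t by (rule linear_ode_exp_solution)
  then show "\<bar>kinetic_energy F t - E\<bar> \<le> \<bar>kinetic_energy F 0 - E\<bar> * exp (- mu * t / 2)"
    by (simp add: abs_mult)
qed

end
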